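(* Let $S$ be an inverse semigroup, let $\alpha$ be an automorphism of $S$, and define $\psi : S\to S$ by $x\psi = x^{-1}\cdot (x\alpha)$ for all $x\in S$. Then: (1) If $\mathrm{Fix}(\alpha) = E(S)$, then $\psi$ is injective. (2) If $\psi$ is injective, then $\mathrm{Fix}(\alpha)\subseteq E(S)$.
   Context: In an inverse semigroup $S$, $x^{-1}$ denotes the unique inverse of $x$ (the unique element with $xx^{-1}x=x$ and $x^{-1}xx^{-1}=x^{-1}$). $E(S)$ is the set of idempotents of $S$; for an automorphism $\alpha$ of $S$ (written on the right, $x\mapsto x\alpha$), $\mathrm{Fix}(\alpha) = \{x\in S \mid x\alpha = x\}$. *)

theory Defs
  imports Main
begin

definition is_inv :: "'a::semigroup_mult \<Rightarrow> 'a \<Rightarrow> bool" where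
  "is_inv x y \<longleftrightarrow> x * y * x = x \<and> y * x * y = y"

definition inverse_semigroup :: "'a::semigroup_mult itself \<Rightarrow> bool" where
  "inverse_semigroup _ \<longleftrightarrow> (\<forall>x::'a. \<exists>!y. is_inv x y)"

definition sinv :: "'a::semigroup_mult \<Rightarrow> 'a" where
  "sinv x = (THE y. is_inv x y)"

definition idempotents :: "'a::semigroup_mult set" where
  "idempotents = {e. e * e = e}"

definition semigroup_aut :: "('a::semigroup_mult \<Rightarrow> 'a) \<Rightarrow> bool" where
  "semigroup_aut f \<longleftrightarrow> bij f \<and> (\<forall>x y. f (x * y) = f x * f y)"

definition Fix :: "('a \<Rightarrow> 'a) \<Rightarrow> 'a set" where
  "Fix f = {x. f x = x}"

end

theory Submission
  imports Defs
begin

text \<open>Inverse semigroups have commuting idempotents and satisfy \<open>(xy)\<inverse> = y\<inverse>x\<inverse>\<close>; all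
  needed identities follow from these and uniqueness of inverses.
  For (1): since every idempotent is fixed, \<open>x\<cdot>x\<psi> = x\<alpha>\<close> and \<open>x\<psi>(x\<psi>)\<inverse> = x\<inverse>x\<close>. Hence
  \<open>x\<psi> = y\<psi>\<close> gives \<open>x\<inverse>x = y\<inverse>y\<close> and makes \<open>xy\<inverse>\<close> a fixed point of \<open>\<alpha>\<close>, i.e. an idempotent,
  and these two facts force \<open>x = y\<close>.
  For (2): if \<open>x\<alpha> = x\<close> then \<open>x\<psi> = x\<inverse>x = (x\<inverse>x)\<psi>\<close>, so injectivity gives \<open>x = x\<inverse>x\<close>.\<close>

locale inverse_semigroup_type =
  assumes inverse_semigroup: "inverse_semigroup TYPE('a::semigroup_mult)"
begin

lemma is_inv_sinv: "is_inv (x::'a) (sinv x)"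
  using inverse_semigroup unfolding inverse_semigroup_def sinv_def by (blast intro: theI')

lemma sinv_unique: "is_inv (x::'a) y \<Longrightarrow> sinv x = y"
  using inverse_semigroup is_inv_sinv unfolding inverse_semigroup_def by blast

lemma mult_sinv_mult: "(x::'a) * sinv x * x = x"
  using is_inv_sinv by (simp add: is_inv_def)

lemma sinv_mult_sinv: "sinv (x::'a) * x * sinv x = sinv x"
  using is_inv_sinv by (simp add: is_inv_def)

lemma sinv_sinv [simp]: "sinv (sinv (x::'a)) = x"
  by (rule sinv_unique) (simp add: is_inv_def mult_sinv_mult sinv_mult_sinv)

lemma sinv_idem: "(e::'a) * e = e \<Longrightarrow> sinv e = e"
  by (rule sinv_unique) (simp add: is_inv_def)

lemma mult_sinv_idem: "((x::'a) * sinv x) * (x * sinv x) = x * sinv x"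
  using mult_sinv_mult by (metis mult.assoc)

lemma sinv_mult_idem: "(sinv (x::'a) * x) * (sinv x * x) = sinv x * x"
  using sinv_mult_sinv by (metis mult.assoc)

text \<open>The inverse \<open>u\<close> of \<open>ef\<close> satisfies \<open>u = f u e\<close> and is idempotent; being its own
  inverse it equals \<open>ef\<close>.\<close>
lemma idem_mult_idem:
  assumes e: "(e::'a) * e = e" and f: "f * f = f"
  shows "(e * f) * (e * f) = e * f"
proof -
  define u where "u = sinv (e * f)"
  have e_left: "e * (e * w) = e * w" and f_left: "f * (f * w) = f * w" for w
    using e f by (metis mult.assoc)+
  have "is_inv (e * f) (f * u * e)"
    unfolding is_inv_def
  proof
    have "e * f * (f * u * e) * (e * f) = e * f * u * (e * f)"
      using e_left f_left by (simp add: mult.assoc)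
    also have "\<dots> = e * f"
      using mult_sinv_mult[of "e * f"] by (simp add: u_def mult.assoc)
    finally show "e * f * (f * u * e) * (e * f) = e * f" .
    have "f * u * e * (e * f) * (f * u * e) = f * (u * (e * f) * u) * e"
      using e_left f_left by (simp add: mult.assoc)
    also have "\<dots> = f * u * e"
      using sinv_mult_sinv[of "e * f"] by (simp add: u_def mult.assoc)
    finally show "f * u * e * (e * f) * (f * u * e) = f * u * e" .
  qed
  then have u_eq: "u = f * u * e"
    using sinv_unique u_def by metis
  have "u * u = f * (u * (e * f) * u) * e"
    using e f u_eq by (metis mult.assoc)
  also have "\<dots> = u"
    using sinv_mult_sinv[of "e * f"] u_eq by (simp add: u_def)
  finally have u_idem: "u * u = u" .
  have "e * f = sinv u"
    by (simp add: u_def)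
  also have "\<dots> = u"
    using u_idem by (rule sinv_idem)
  finally show ?thesis
    using u_idem by simp
qed

lemma idem_commute:
  assumes e: "(e::'a) * e = e" and f: "f * f = f"
  shows "e * f = f * e"
proof -
  have ef: "(e * f) * (e * f) = e * f" and fe: "(f * e) * (f * e) = f * e"
    using idem_mult_idem e f by blast+
  have "is_inv (e * f) (f * e)"
    unfolding is_inv_def using ef fe e f by (metis mult.assoc)
  then have "sinv (e * f) = f * e"
    by (rule sinv_unique)
  then show ?thesis
    using sinv_idem[OF ef] by simp
qed

lemma sinv_mult: "sinv ((x::'a) * y) = sinv y * sinv x"
proof (rule sinv_unique)
  have "(y * sinv y) * (sinv x * x) = (sinv x * x) * (y * sinv y)"
    using idem_commute mult_sinv_idem sinv_mult_idem by blast
  then have swap: "y * (sinv y * (sinv x * (x * w))) = sinv x * (x * (y * (sinv y * w)))" for w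
    by (metis mult.assoc)
  have "x * y * (sinv y * sinv x) * (x * y) = x * ((y * sinv y) * (sinv x * x)) * y"
    by (simp add: mult.assoc)
  also have "\<dots> = (x * sinv x * x) * (y * sinv y * y)"
    using swap by (simp add: mult.assoc)
  also have "\<dots> = x * y"
    by (simp only: mult_sinv_mult)
  finally have left: "x * y * (sinv y * sinv x) * (x * y) = x * y" .
  have "sinv y * sinv x * (x * y) * (sinv y * sinv x)
      = sinv y * ((sinv x * x) * (y * sinv y)) * sinv x"
    by (simp add: mult.assoc)
  also have "\<dots> = (sinv y * y * sinv y) * (sinv x * x * sinv x)"
    using swap by (simp add: mult.assoc)
  also have "\<dots> = sinv y * sinv x"
    by (simp only: sinv_mult_sinv)
  finally have right: "sinv y * sinv x * (x * y) * (sinv y * sinv x) = sinv y * sinv x" .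
  show "is_inv (x * y) (sinv y * sinv x)"
    unfolding is_inv_def using left right ..
qed

lemma hom_sinv:
  fixes f :: "'a \<Rightarrow> 'a"
  assumes "\<And>x y. f (x * y) = f x * f y"
  shows "f (sinv x) = sinv (f x)"
  by (rule sinv_unique[THEN sym]) (metis assms is_inv_def mult_sinv_mult sinv_mult_sinv)

lemma eq_if_idem_mult_sinv:
  assumes same_domain: "sinv (x::'a) * x = sinv y * y"
    and idem: "(x * sinv y) * (x * sinv y) = x * sinv y"
  shows "x = y"
proof -
  define z where "z = x * sinv y"
  have z_idem: "z * z = z"
    using idem by (simp add: z_def)
  have "z * y = x * (sinv y * y)"
    by (simp add: z_def mult.assoc)
  also have "\<dots> = x * (sinv x * x)"
    by (simp only: same_domain)
  also have "\<dots> = x"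
    by (simp only: mult.assoc[symmetric] mult_sinv_mult)
  finally have zy: "z * y = x" .
  have "z * x = sinv z * x"
    using sinv_idem z_idem by simp
  also have "\<dots> = y * (sinv x * x)"
    by (simp add: z_def sinv_mult mult.assoc)
  also have "\<dots> = y * (sinv y * y)"
    by (simp only: same_domain)
  also have "\<dots> = y"
    by (simp only: mult.assoc[symmetric] mult_sinv_mult)
  finally have zx: "z * x = y" .
  have "y = (z * z) * y"
    using zx zy by (simp add: mult.assoc)
  then show ?thesis
    using z_idem zy by simp
qed

end

locale inverse_semigroup_hom = inverse_semigroup_type +
  fixes alpha :: "'a::semigroup_mult \<Rightarrow> 'a"
  assumes hom: "alpha (x * y) = alpha x * alpha y"
begin

lemma alpha_sinv: "alpha (sinv x) = sinv (alpha x)"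
  using hom_sinv hom by blast

lemma mult_psi:
  assumes "idempotents \<subseteq> Fix alpha"
  shows "x * (sinv x * alpha x) = alpha x"
proof -
  have fixed: "alpha (x * sinv x) = x * sinv x"
    using assms mult_sinv_idem by (auto simp: idempotents_def Fix_def)
  have "x * (sinv x * alpha x) = alpha (x * sinv x) * alpha x"
    by (simp add: fixed mult.assoc)
  also have "\<dots> = alpha x * sinv (alpha x) * alpha x"
    by (simp add: hom alpha_sinv)
  also have "\<dots> = alpha x"
    by (rule mult_sinv_mult)
  finally show ?thesis .
qed

lemma psi_mult_sinv_psi:
  assumes "idempotents \<subseteq> Fix alpha"
  shows "(sinv x * alpha x) * sinv (sinv x * alpha x) = sinv x * x"
proof -
  have fixed: "alpha (x * sinv x) = x * sinv x"
    using assms mult_sinv_idem by (auto simp: idempotents_def Fix_def)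
  have "(sinv x * alpha x) * sinv (sinv x * alpha x) = sinv x * alpha (x * sinv x) * x"
    by (simp add: sinv_mult hom alpha_sinv mult.assoc)
  also have "\<dots> = (sinv x * x) * (sinv x * x)"
    by (simp add: fixed mult.assoc)
  also have "\<dots> = sinv x * x"
    by (rule sinv_mult_idem)
  finally show ?thesis .
qed

lemma inj_psi:
  assumes "Fix alpha = idempotents"
  shows "inj (\<lambda>x. sinv x * alpha x)"
proof (rule injI)
  fix x y
  define p where "p = sinv x * alpha x"
  assume "sinv x * alpha x = sinv y * alpha y"
  then have p_y: "p = sinv y * alpha y"
    by (simp add: p_def)
  have idem_fixed: "idempotents \<subseteq> Fix alpha"
    using assms by simp
  have "sinv x * x = p * sinv p"
    using psi_mult_sinv_psi[OF idem_fixed, of x] by (simp add: p_def)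
  also have "\<dots> = sinv y * y"
    using psi_mult_sinv_psi[OF idem_fixed, of y] by (simp add: p_y)
  finally have same_domain: "sinv x * x = sinv y * y" .
  have "alpha (x * sinv y) = alpha x * sinv (alpha y)"
    by (simp add: hom alpha_sinv)
  also have "\<dots> = (x * p) * sinv (y * p)"
    using mult_psi[OF idem_fixed, of x] mult_psi[OF idem_fixed, of y] p_def p_y by simp
  also have "\<dots> = x * (p * sinv p) * sinv y"
    by (simp add: sinv_mult mult.assoc)
  also have "\<dots> = (x * sinv x * x) * sinv y"
    using psi_mult_sinv_psi[OF idem_fixed] by (simp add: p_def mult.assoc)
  also have "\<dots> = x * sinv y"
    by (simp add: mult_sinv_mult)
  finally have "(x * sinv y) * (x * sinv y) = x * sinv y"
    using assms by (auto simp: Fix_def idempotents_def)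
  with same_domain show "x = y"
    by (rule eq_if_idem_mult_sinv)
qed

lemma Fix_subset_idempotents:
  assumes "inj (\<lambda>x. sinv x * alpha x)"
  shows "Fix alpha \<subseteq> idempotents"
proof
  fix x
  assume "x \<in> Fix alpha"
  then have fixed: "alpha x = x"
    by (simp add: Fix_def)
  define e where "e = sinv x * x"
  have idem: "e * e = e"
    using sinv_mult_idem by (simp add: e_def)
  have "alpha e = e"
    by (simp add: e_def hom alpha_sinv fixed)
  then have "sinv e * alpha e = e * e"
    by (simp add: sinv_idem[OF idem])
  also have "\<dots> = sinv x * alpha x"
    using idem fixed by (simp add: e_def)
  finally have "e = x"
    using assms unfolding inj_def by blast
  then show "x \<in> idempotents"
    using idem by (simp add: idempotents_def)
qed

end

theorem lemma2p1:
  fixes alpha :: "'a::semigroup_mult \<Rightarrow> 'a"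
  assumes "inverse_semigroup TYPE('a)"
    and "semigroup_aut alpha"
  defines "psi \<equiv> (\<lambda>x. sinv x * alpha x)"
  shows "(Fix alpha = idempotents \<longrightarrow> inj psi) \<and> (inj psi \<longrightarrow> Fix alpha \<subseteq> idempotents)"
proof -
  interpret inverse_semigroup_hom alpha
    using assms(1,2) by unfold_locales (simp_all add: semigroup_aut_def)
  show ?thesis
    unfolding psi_def using inj_psi Fix_subset_idempotents by simp
qed

end
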